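(* If $B,C\in \mathcal{B}_{A}(\mathcal{H})$, then \begin{align*} d\omega _{A_{0}}^{4}\left( \begin{bmatrix} 0 & B \\ C & 0 \end{bmatrix} \right) &\leq \max \left\{ \omega _{A}\left( \left( C^{\sharp _{A}}C\right) ^{2}+\left( C^{\sharp _{A}}C\right) ^{4}\right) ,\omega _{A}\left( \left( B^{\sharp _{A}}B\right) ^{2}+\left( B^{\sharp _{A}}B\right) ^{4}\right) \right\} \\ &\quad+2\omega _{A_{0}}^{2}\left( \begin{bmatrix} 0 & C^{\sharp _{A}}CB \\ B^{\sharp _{A}}BC & 0 \end{bmatrix} \right). \end{align*}
   Context: $\mathcal{H}$ is a complex Hilbert space and $A\in\mathcal{B}(\mathcal{H})$ is a positive operator; $\langle x,z\rangle_A=\langle Ax,z\rangle$ and $\|z\|_A=\|A^{1/2}z\|$. $\mathcal{B}_A(\mathcal{H})$ denotes the set of bounded operators $S$ on $\mathcal{H}$ admitting an $A$-adjoint; $S^{\sharp_A}=A^{\dagger}S^*A$ is the distinguished $A$-adjoint ($A^\dagger$ the Moore-Penrose inverse). $\omega_A(S)=\sup\{|\langle Sz,z\rangle_A|:\|z\|_A=1\}$ is the $A$-numerical radius. $A_0=\begin{bmatrix} A&0\\0&A\end{bmatrix}$ on $\mathcal{H}\oplus\mathcal{H}$ induces $\langle x,z\rangle_{A_0}=\langle x_1,z_1\rangle_A+\langle x_2,z_2\rangle_A$; $\omega_{A_0}$ is the $A_0$-numerical radius and $d\omega_{A_0}(X)=\sup\{(|\langle Xz,z\rangle_{A_0}|^2+\|Xz\|_{A_0}^4)^{1/2}:\|z\|_{A_0}=1\}$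 is the $A_0$-Davis-Wielandt radius. *)

theory Defs
  imports "HOL-Analysis.Analysis"
begin

class scaleC = scaleR +
  fixes scaleC :: "complex \<Rightarrow> 'a \<Rightarrow> 'a" (infixr "*\<^sub>C" 75)
  assumes scaleR_scaleC: "scaleR r = scaleC (complex_of_real r)"

class complex_vector = scaleC + ab_group_add +
  assumes scaleC_add_right: "a *\<^sub>C (x + y) = a *\<^sub>C x + a *\<^sub>C y"
    and scaleC_add_left: "(a + b) *\<^sub>C x = a *\<^sub>C x + b *\<^sub>C x"
    and scaleC_scaleC: "a *\<^sub>C (b *\<^sub>C x) = (a * b) *\<^sub>C x"
    and scaleC_one: "1 *\<^sub>C x = x"

class complex_inner = complex_vector + real_normed_vector +
  fixes cinner :: "'a \<Rightarrow> 'a \<Rightarrow> complex"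
  assumes cinner_commute: "cinner x y = cnj (cinner y x)"
    and cinner_add_left: "cinner (x + y) z = cinner x z + cinner y z"
    and cinner_scaleC_left: "cinner (r *\<^sub>C x) y = r * cinner x y"
    and cinner_nonneg: "0 \<le> Re (cinner x x)"
    and cinner_eq_zero_iff: "cinner x x = 0 \<longleftrightarrow> x = 0"
    and norm_eq_sqrt_cinner: "norm x = sqrt (Re (cinner x x))"

class chilbert_space = complex_inner + complete_space

definition cbounded_linear :: "('a::complex_inner \<Rightarrow> 'a) \<Rightarrow> bool" where
  "cbounded_linear f \<longleftrightarrow> (\<forall>x y. f (x + y) = f x + f y) \<and> (\<forall>c x. f (c *\<^sub>C x) = c *\<^sub>C f x)
     \<and> (\<exists>K. \<forall>x. norm (f x) \<le> norm x * K)"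

definition cadj :: "('a::complex_inner \<Rightarrow> 'a) \<Rightarrow> ('a \<Rightarrow> 'a)" where
  "cadj T = (THE T'. \<forall>x y. cinner (T x) y = cinner x (T' y))"

definition positive_op :: "('a::complex_inner \<Rightarrow> 'a) \<Rightarrow> bool" where
  "positive_op A \<longleftrightarrow> cbounded_linear A \<and> (\<forall>x. Im (cinner (A x) x) = 0 \<and> 0 \<le> Re (cinner (A x) x))"

definition cinnerA :: "('a::complex_inner \<Rightarrow> 'a) \<Rightarrow> 'a \<Rightarrow> 'a \<Rightarrow> complex" where
  "cinnerA A x z = cinner (A x) z"

text \<open>\<open>\<parallel>z\<parallel>_A = \<parallel>A^(1/2) z\<parallel> = sqrt \<langle>Az,z\<rangle>\<close>.\<close>
definition normA :: "('a::complex_inner \<Rightarrow> 'a) \<Rightarrow> 'a \<Rightarrow> real" where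
  "normA A z = sqrt (Re (cinner (A z) z))"

definition BA :: "('a::complex_inner \<Rightarrow> 'a) \<Rightarrow> ('a \<Rightarrow> 'a) set" where
  "BA A = {S. cbounded_linear S \<and>
      (\<exists>T. cbounded_linear T \<and> (\<forall>x y. cinnerA A (S x) y = cinnerA A x (T y)))}"

definition mp_inv :: "('a::complex_inner \<Rightarrow> 'a) \<Rightarrow> 'a \<Rightarrow> 'a" where
  "mp_inv A y = (THE z. (\<forall>k. A k = 0 \<longrightarrow> cinner z k = 0) \<and> A z = y)"

definition sharpA :: "('a::complex_inner \<Rightarrow> 'a) \<Rightarrow> ('a \<Rightarrow> 'a) \<Rightarrow> ('a \<Rightarrow> 'a)" where
  "sharpA A S = (\<lambda>x. mp_inv A (cadj S (A x)))"

definition omegaA :: "('a::complex_inner \<Rightarrow> 'a) \<Rightarrow> ('a \<Rightarrow> 'a) \<Rightarrow> real" where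
  "omegaA A S = Sup {cmod (cinnerA A (S z) z) | z. normA A z = 1}"

definition cinnerA0 :: "('a::complex_inner \<Rightarrow> 'a) \<Rightarrow> 'a \<times> 'a \<Rightarrow> 'a \<times> 'a \<Rightarrow> complex" where
  "cinnerA0 A x z = cinnerA A (fst x) (fst z) + cinnerA A (snd x) (snd z)"

definition normA0 :: "('a::complex_inner \<Rightarrow> 'a) \<Rightarrow> 'a \<times> 'a \<Rightarrow> real" where
  "normA0 A z = sqrt (Re (cinnerA0 A z z))"

definition opmat :: "('a::complex_inner \<Rightarrow> 'a) \<Rightarrow> ('a \<Rightarrow> 'a) \<Rightarrow> ('a \<Rightarrow> 'a) \<Rightarrow> ('a \<Rightarrow> 'a)
    \<Rightarrow> ('a \<times> 'a \<Rightarrow> 'a \<times> 'a)" where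
  "opmat P Q R S = (\<lambda>x. (P (fst x) + Q (snd x), R (fst x) + S (snd x)))"

definition omegaA0 :: "('a::complex_inner \<Rightarrow> 'a) \<Rightarrow> ('a \<times> 'a \<Rightarrow> 'a \<times> 'a) \<Rightarrow> real" where
  "omegaA0 A X = Sup {cmod (cinnerA0 A (X z) z) | z. normA0 A z = 1}"

definition dwA0 :: "('a::complex_inner \<Rightarrow> 'a) \<Rightarrow> ('a \<times> 'a \<Rightarrow> 'a \<times> 'a) \<Rightarrow> real" where
  "dwA0 A X = Sup {sqrt ((cmod (cinnerA0 A (X z) z))\<^sup>2 + (normA0 A (X z)) ^ 4) | z. normA0 A z = 1}"

end

(*
  The estimate is proved pointwise. For an A_0-unit vector z = (x, y) let w = (B y, C x) be its
  image under the block operator, and with P = C^#C and Q = B^#B let v = (P x, Q y) and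
  t = (P^2 x, Q^2 y). Since C^# and B^# are A-adjoints, <v, z> = |w|^2 and <t, z> = |v|^2 in the
  A_0-semi-inner product; moreover |v|^2 + |t|^2 = <(P^2 + P^4) x, x> + <(Q^2 + Q^4) y, y> is at
  most the maximum of the two numerical radii, and <w, v> = <Y z, z> for the block operator Y on
  the right-hand side. Splitting w and v into their components along z and orthogonal to z
  reduces (|<w, z>|^2 + |w|^4)^2 <= |v|^2 + |t|^2 + 2 |<w, v>|^2 to an inequality between real
  numbers, which follows from a sum-of-squares identity.

  To make sense of C^# at all one needs the Hilbert adjoint and the Moore-Penrose inverse on the
  range of A, both obtained from the projection theorem; and the numerical radii are finite
  because operators in B_A(H) are bounded for the A-seminorm (by a spectral-radius type argument
  for the A-selfadjoint operator T C, T an A-adjoint of C).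
*)

theory Submission
  imports Defs
begin

declare scaleC_one [simp]

lemma scaleC_zero_left [simp]: "(0::complex) *\<^sub>C (x::'a::complex_vector) = 0"
proof -
  have "(0::complex) *\<^sub>C x = (0 + 0) *\<^sub>C x" by simp
  also have "\<dots> = 0 *\<^sub>C x + 0 *\<^sub>C x" by (rule scaleC_add_left)
  finally show ?thesis by simp
qed

lemma scaleC_zero_right [simp]: "c *\<^sub>C (0::'a::complex_vector) = 0"
proof -
  have "c *\<^sub>C (0::'a) = c *\<^sub>C (0 + 0)" by simp
  also have "\<dots> = c *\<^sub>C 0 + c *\<^sub>C 0" by (rule scaleC_add_right)
  finally show ?thesis by simp
qed

lemma scaleC_diff_right: "c *\<^sub>C ((x::'a::complex_vector) - y) = c *\<^sub>C x - c *\<^sub>C y"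
  by (metis scaleC_add_right diff_add_cancel add_diff_cancel)

lemma scaleC_minus_left: "(- c) *\<^sub>C (x::'a::complex_vector) = - (c *\<^sub>C x)"
proof -
  have "(- c) *\<^sub>C x + c *\<^sub>C x = 0"
    by (metis scaleC_add_left add.left_inverse scaleC_zero_left)
  then show ?thesis by (simp add: eq_neg_iff_add_eq_0)
qed

lemma funpow_scaleC:
  fixes S :: "'a::complex_vector \<Rightarrow> 'a"
  assumes "\<And>c x. S (c *\<^sub>C x) = c *\<^sub>C S x" shows "(S ^^ n) (c *\<^sub>C x) = c *\<^sub>C (S ^^ n) x"
proof (induction n)
  case (Suc n)
  then show ?case by (simp add: assms)
qed simp

section \<open>Semi-inner products\<close>

text \<open>A locale rather than a class: it is instantiated with the degenerate forms \<open>cinnerA A\<close> on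
  \<open>H\<close> and \<open>cinnerA0 A\<close> on \<open>H \<times> H\<close>, which has no complex vector space instance, with the
  componentwise scalar multiplication as \<open>sc\<close>.\<close>

locale semi_inner =
  fixes ip :: "'v::ab_group_add \<Rightarrow> 'v \<Rightarrow> complex" and sc :: "complex \<Rightarrow> 'v \<Rightarrow> 'v"
  assumes add_left: "ip (x + y) z = ip x z + ip y z"
    and scale_left: "ip (sc c x) y = c * ip x y"
    and conj_sym: "ip x y = cnj (ip y x)"
    and diag_nonneg: "0 \<le> Re (ip x x)"
begin

lemma add_right: "ip x (y + z) = ip x y + ip x z"
  by (metis add_left conj_sym complex_cnj_add)

lemma scale_right: "ip x (sc c y) = cnj c * ip x y"
  by (metis scale_left conj_sym complex_cnj_mult complex_cnj_cnj)

lemma diff_left: "ip (x - y) z = ip x z - ip y z"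
  by (metis add_left diff_add_cancel eq_diff_eq)

lemma diff_right: "ip x (y - z) = ip x y - ip x z"
  by (metis diff_left conj_sym complex_cnj_diff)

lemma zero_left [simp]: "ip 0 y = 0"
  by (metis diff_left diff_self)

lemma zero_right [simp]: "ip y 0 = 0"
  by (metis diff_right diff_self)

lemma diag_real: "ip x x = complex_of_real (Re (ip x x))"
  by (metis conj_sym cnj.simps(2) neg_equal_zero complex_eq_iff Im_complex_of_real Re_complex_of_real)

lemma Re_diag_diff_scale:
  "Re (ip (x - sc t y) (x - sc t y))
     = Re (ip x x) - 2 * Re (cnj t * ip x y) + (cmod t)\<^sup>2 * Re (ip y y)"
proof -
  have "ip (x - sc t y) (x - sc t y) = ip x x - cnj t * ip x y - t * ip y x + t * cnj t * ip y y"
    by (simp add: diff_left diff_right scale_left scale_right algebra_simps)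
  moreover have "Re (t * ip y x) = Re (cnj t * ip x y)"
    by (subst conj_sym) simp
  moreover have "t * cnj t * ip y y = complex_of_real ((cmod t)\<^sup>2 * Re (ip y y))"
    by (subst diag_real) (simp add: complex_norm_square[symmetric])
  ultimately show ?thesis by simp
qed

lemma cauchy_schwarz: "(cmod (ip x y))\<^sup>2 \<le> Re (ip x x) * Re (ip y y)"
proof (cases "Re (ip y y) = 0")
  case False
  then have y: "Re (ip y y) > 0" using diag_nonneg[of y] by simp
  define t where "t = ip x y / complex_of_real (Re (ip y y))"
  have "0 \<le> Re (ip (x - sc t y) (x - sc t y))" by (rule diag_nonneg)
  also have "\<dots> = Re (ip x x) - (cmod (ip x y))\<^sup>2 / Re (ip y y)"
    using y by (simp add: Re_diag_diff_scale t_def norm_divide power2_eq_square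
        complex_norm_square[symmetric] mult.commute)
  finally show ?thesis using y by (simp add: field_simps)
next
  case True
  show ?thesis
  proof (rule ccontr)
    assume "\<not> ?thesis"
    then have c: "cmod (ip x y) > 0" using True by auto
    define s where "s = (Re (ip x x) + 1) / (cmod (ip x y))\<^sup>2"
    define t where "t = complex_of_real s * ip x y"
    have "cnj t * ip x y = complex_of_real s * (ip x y * cnj (ip x y))"
      by (simp add: t_def)
    also have "ip x y * cnj (ip x y) = complex_of_real ((cmod (ip x y))\<^sup>2)"
      by (rule complex_norm_square[symmetric])
    also have "complex_of_real s * complex_of_real ((cmod (ip x y))\<^sup>2)
        = complex_of_real (Re (ip x x) + 1)"
      using c by (simp add: s_def)
    finally have "Re (ip (x - sc t y) (x - sc t y)) = - Re (ip x x) - 2"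
      using True by (simp add: Re_diag_diff_scale)
    then show False using diag_nonneg[of x] diag_nonneg[of "x - sc t y"] by simp
  qed
qed

lemma cauchy_schwarz_sqrt: "cmod (ip x y) \<le> sqrt (Re (ip x x)) * sqrt (Re (ip y y))"
  by (metis cauchy_schwarz real_sqrt_le_mono real_sqrt_abs abs_norm_cancel real_sqrt_mult)

end

interpretation cinner: semi_inner "cinner :: 'a::complex_inner \<Rightarrow> 'a \<Rightarrow> complex" scaleC
  by unfold_locales (auto intro: cinner_add_left cinner_scaleC_left cinner_commute cinner_nonneg)

lemma power2_norm_eq_cinner: "(norm (x::'a::complex_inner))\<^sup>2 = Re (cinner x x)"
  by (simp add: norm_eq_sqrt_cinner cinner_nonneg)

lemma norm_cinner_le: "cmod (cinner x y) \<le> norm (x::'a::complex_inner) * norm y"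
  using cinner.cauchy_schwarz_sqrt[of x y] by (simp add: norm_eq_sqrt_cinner)

lemma cinner_right_eqI:
  assumes "\<And>z. cinner z a = cinner z (b::'a::complex_inner)" shows "a = b"
proof -
  have "cinner (a - b) (a - b) = 0"
    using assms[of "a - b"] by (simp add: cinner.diff_right)
  then show ?thesis by (simp add: cinner_eq_zero_iff)
qed

lemma power2_norm_diff_scaleC:
  "(norm (x - c *\<^sub>C y))\<^sup>2
     = (norm (x::'a::complex_inner))\<^sup>2 - 2 * Re (cnj c * cinner x y) + (cmod c)\<^sup>2 * (norm y)\<^sup>2"
  using cinner.Re_diag_diff_scale[of x c y] by (simp add: power2_norm_eq_cinner)

lemma norm_scaleC: "norm (c *\<^sub>C (x::'a::complex_inner)) = cmod c * norm x"
proof -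
  have "(norm (c *\<^sub>C x))\<^sup>2 = (cmod c * norm x)\<^sup>2"
    using power2_norm_diff_scaleC[of 0 "-c" x] by (simp add: power_mult_distrib scaleC_minus_left)
  then show ?thesis by (simp add: power2_eq_iff_nonneg)
qed

lemma parallelogram_law:
  "(norm (a - b))\<^sup>2 + (norm (a + b))\<^sup>2 = 2 * (norm (a::'a::complex_inner))\<^sup>2 + 2 * (norm b)\<^sup>2"
  using power2_norm_diff_scaleC[of a "-1" b] power2_norm_diff_scaleC[of a 1 b]
  by (simp add: scaleC_minus_left)

section \<open>A quartic estimate in semi-inner product spaces\<close>

lemma quartic_real_inequality:
  fixes d p s r g T :: real
  assumes pd: "p\<^sup>2 \<le> d" and s0: "0 \<le> s" and sr: "s\<^sup>2 \<le> (d - p\<^sup>2) * r"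
    and r0: "0 \<le> r" and T: "(d\<^sup>2 + r)\<^sup>2 \<le> T" and g: "\<bar>d * p - s\<bar> \<le> g"
  shows "(p\<^sup>2 + d\<^sup>2)\<^sup>2 \<le> (d\<^sup>2 + r) + T + 2 * g\<^sup>2"
proof -
  define a where "a = p\<^sup>2"
  have ad: "a \<le> d" using pd by (simp add: a_def)
  have "\<bar>d * p - s\<bar> \<le> \<bar>g\<bar>" using g by simp
  then have g2: "(d * p - s)\<^sup>2 \<le> g\<^sup>2" by (simp add: abs_le_square_iff)
  have key: "a\<^sup>2 \<le> d\<^sup>2 + r * (1 + 2 * d\<^sup>2) - 4 * d * p * s + 2 * s\<^sup>2"
  proof (cases "a = d")
    case True
    then have "s = 0" using sr s0 by (simp add: a_def)
    then show ?thesis using True r0 by simp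
  next
    case False
    then have e: "d - a > 0" using ad by simp
    \<comment> \<open>\<open>d - a\<close> times the defect is a sum of nonnegative terms\<close>
    have "(d - a) * (d\<^sup>2 + r * (1 + 2 * d\<^sup>2) - 4 * d * p * s + 2 * s\<^sup>2 - a\<^sup>2)
      = (d - a)^3 + s\<^sup>2 * (1 + 2 * (d - a)) + (1 + 2 * d\<^sup>2) * ((d - a) * r - s\<^sup>2)
        + 2 * (d * s - p * (d - a))\<^sup>2"
      unfolding a_def by algebra
    also have "\<dots> \<ge> 0"
      using e sr by (intro add_nonneg_nonneg mult_nonneg_nonneg) (simp_all add: a_def)
    finally show ?thesis
      using e by (simp add: zero_le_mult_iff)
  qed
  then have "a\<^sup>2 \<le> d\<^sup>2 + r + 2 * (d\<^sup>2 * r) - 4 * (d * p * s) + 2 * s\<^sup>2"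
    by (simp add: algebra_simps)
  moreover have "(p\<^sup>2 + d\<^sup>2)\<^sup>2 = a\<^sup>2 + 2 * (a * d\<^sup>2) + d^4"
    and "(d\<^sup>2 + r)\<^sup>2 = d^4 + 2 * (d\<^sup>2 * r) + r\<^sup>2"
    and "(d * p - s)\<^sup>2 = a * d\<^sup>2 - 2 * (d * p * s) + s\<^sup>2"
    by (simp_all add: a_def power2_eq_square power4_eq_xxxx algebra_simps)
  moreover have "0 \<le> r\<^sup>2" by simp
  ultimately show ?thesis using T g2 by linarith
qed

context semi_inner
begin

text \<open>Write \<open>w = p z + w'\<close> and \<open>v = d z + r\<close> with \<open>w'\<close>, \<open>r\<close> orthogonal to \<open>z\<close>, where
  \<open>d = \<parallel>w\<parallel>\<^sup>2\<close>. Then \<open>\<parallel>w'\<parallel>\<^sup>2 = d - \<bar>p\<bar>\<^sup>2\<close>, \<open>\<parallel>v\<parallel>\<^sup>2 = d\<^sup>2 + \<parallel>r\<parallel>\<^sup>2\<close>, \<open>\<langle>w, v\<rangle> = d p + \<langle>w', r\<rangle>\<close>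
  and \<open>\<parallel>t\<parallel> \<ge> \<bar>\<langle>t, z\<rangle>\<bar> = \<parallel>v\<parallel>\<^sup>2\<close>, so Cauchy-Schwarz reduces the claim to
  \<open>quartic_real_inequality\<close>.\<close>

lemma quartic_estimate:
  assumes z1: "Re (ip z z) = 1" and vz: "ip v z = ip w w" and tz: "ip t z = ip v v"
  shows "((cmod (ip w z))\<^sup>2 + (Re (ip w w))\<^sup>2)\<^sup>2
    \<le> Re (ip v v) + Re (ip t t) + 2 * (cmod (ip w v))\<^sup>2"
proof -
  define d where "d = Re (ip w w)"
  have vzd: "ip v z = complex_of_real d" unfolding d_def using vz diag_real by simp
  have zz: "ip z z = 1" using diag_real[of z] z1 by simp
  define p where "p = ip w z"
  have pd: "(cmod p)\<^sup>2 \<le> d" using cauchy_schwarz[of w z] z1 by (simp add: p_def d_def)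
  define r where "r = v - sc (complex_of_real d) z"
  have rr: "Re (ip r r) = Re (ip v v) - d\<^sup>2"
    unfolding r_def Re_diag_diff_scale vzd using z1 by (simp add: power2_eq_square)
  define w' where "w' = w - sc p z"
  have w'w': "Re (ip w' w') = d - (cmod p)\<^sup>2"
  proof -
    have "p * cnj p = complex_of_real ((cmod p)\<^sup>2)" by (rule complex_norm_square[symmetric])
    then show ?thesis
      unfolding w'_def Re_diag_diff_scale using z1 by (simp add: d_def p_def mult.commute)
  qed
  have rz: "ip z r = 0"
    using conj_sym[of z r] by (simp add: r_def diff_left scale_left vzd zz)
  define q where "q = ip w' r"
  have wv: "ip w v = complex_of_real d * p + q"
  proof -
    have "q = ip w r" by (simp add: q_def w'_def diff_left scale_left rz)
    also have "\<dots> = ip w v - complex_of_real d * p" by (simp add: r_def diff_right scale_right p_def)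
    finally show ?thesis by simp
  qed
  have sr: "(cmod q)\<^sup>2 \<le> (d - (cmod p)\<^sup>2) * Re (ip r r)"
    using cauchy_schwarz[of w' r] by (simp add: q_def w'w')
  have d0: "0 \<le> d" using pd by (meson order_trans zero_le_power2)
  have T: "(d\<^sup>2 + Re (ip r r))\<^sup>2 \<le> Re (ip t t)"
  proof -
    have "(d\<^sup>2 + Re (ip r r))\<^sup>2 = (Re (ip v v))\<^sup>2" using rr by simp
    also have "\<dots> = (cmod (ip t z))\<^sup>2" using tz diag_real[of v] by (metis norm_of_real power2_abs)
    also have "\<dots> \<le> Re (ip t t) * Re (ip z z)" by (rule cauchy_schwarz)
    finally show ?thesis using z1 by simp
  qed
  have g: "\<bar>d * cmod p - cmod q\<bar> \<le> cmod (ip w v)"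
    using norm_triangle_ineq3[of "complex_of_real d * p" "- q"] d0 by (simp add: wv norm_mult)
  have "((cmod p)\<^sup>2 + d\<^sup>2)\<^sup>2 \<le> (d\<^sup>2 + Re (ip r r)) + Re (ip t t) + 2 * (cmod (ip w v))\<^sup>2"
    by (rule quartic_real_inequality[OF pd norm_ge_zero sr diag_nonneg T g])
  then show ?thesis using rr by (simp add: p_def d_def)
qed

end

section \<open>Projections, adjoints and the Moore-Penrose inverse\<close>

definition csubspace :: "'a::complex_vector set \<Rightarrow> bool" where
  "csubspace M \<longleftrightarrow> 0 \<in> M \<and> (\<forall>a\<in>M. \<forall>b\<in>M. a + b \<in> M) \<and> (\<forall>c. \<forall>a\<in>M. c *\<^sub>C a \<in> M)"

lemma Cauchy_if_power2_norm_diff_le: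
  fixes k :: "nat \<Rightarrow> 'a::real_normed_vector"
  assumes e: "e \<longlonglongrightarrow> 0" and bound: "\<And>m n. (norm (k m - k n))\<^sup>2 \<le> e m + e n"
  shows "Cauchy k"
proof (rule CauchyI)
  fix \<epsilon> :: real assume "0 < \<epsilon>"
  then have "0 < \<epsilon>\<^sup>2 / 2" by simp
  then have "eventually (\<lambda>n. e n < \<epsilon>\<^sup>2 / 2) sequentially"
    by (rule order_tendstoD(2)[OF e])
  then obtain N where N: "\<And>n. N \<le> n \<Longrightarrow> e n < \<epsilon>\<^sup>2 / 2"
    by (auto simp: eventually_sequentially)
  show "\<exists>M. \<forall>m\<ge>M. \<forall>n\<ge>M. norm (k m - k n) < \<epsilon>"
  proof (intro exI allI impI)
    fix m n assume "N \<le> m" "N \<le> n"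
    then have "(norm (k m - k n))\<^sup>2 < \<epsilon>\<^sup>2"
      using bound[of m n] N[of m] N[of n] by linarith
    then show "norm (k m - k n) < \<epsilon>"
      using \<open>0 < \<epsilon>\<close> by (simp add: power_less_imp_less_base)
  qed
qed

lemma power2_norm_diff_le_near_closest:
  fixes M :: "'a::complex_inner set"
  assumes M: "csubspace M" and "a \<in> M" and "b \<in> M"
    and low: "\<And>k. k \<in> M \<Longrightarrow> d \<le> norm (x - k)" and "0 \<le> d"
  shows "(norm (a - b))\<^sup>2 \<le> 2 * ((norm (x - a))\<^sup>2 - d\<^sup>2) + 2 * ((norm (x - b))\<^sup>2 - d\<^sup>2)"
proof -
  define mid where "mid = (1/2::complex) *\<^sub>C (a + b)"
  have "mid \<in> M"
    using M \<open>a \<in> M\<close> \<open>b \<in> M\<close> by (simp add: csubspace_def mid_def)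
  have "(2::complex) *\<^sub>C mid = a + b"
    by (simp add: mid_def scaleC_scaleC)
  moreover have "(2::complex) *\<^sub>C x = x + x"
    by (metis one_add_one scaleC_add_left scaleC_one)
  ultimately have "(2::complex) *\<^sub>C (x - mid) = (x + x) - (a + b)"
    using scaleC_diff_right[of 2 x mid] by simp
  moreover have "(x - a) + (x - b) = (x + x) - (a + b)"
    by (simp add: algebra_simps)
  ultimately have "(x - a) + (x - b) = (2::complex) *\<^sub>C (x - mid)"
    by simp
  then have "norm ((x - a) + (x - b)) = 2 * norm (x - mid)"
    by (simp add: norm_scaleC)
  then have "4 * d\<^sup>2 \<le> (norm ((x - a) + (x - b)))\<^sup>2"
    using low[OF \<open>mid \<in> M\<close>] \<open>0 \<le> d\<close> by (simp add: power_mult_distrib power_mono)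
  moreover have "(norm ((x - b) - (x - a)))\<^sup>2 + (norm ((x - b) + (x - a)))\<^sup>2
      = 2 * (norm (x - b))\<^sup>2 + 2 * (norm (x - a))\<^sup>2"
    by (rule parallelogram_law)
  moreover have "(x - b) - (x - a) = a - b" by simp
  ultimately show ?thesis by (simp add: add.commute)
qed

lemma closed_csubspace_closest_point:
  fixes M :: "'a::chilbert_space set"
  assumes "closed M" and M: "csubspace M"
  shows "\<exists>m\<in>M. \<forall>k\<in>M. norm (x - m) \<le> norm (x - k)"
proof -
  define d where "d = Inf ((\<lambda>k. norm (x - k)) ` M)"
  have "0 \<in> M" using M by (simp add: csubspace_def)
  have low: "d \<le> norm (x - k)" if "k \<in> M" for k
    unfolding d_def using that by (intro cInf_lower bdd_belowI[of _ 0]) auto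
  have d0: "0 \<le> d"
    unfolding d_def using \<open>0 \<in> M\<close> by (intro cInf_greatest) auto
  have "\<exists>k\<in>M. (norm (x - k))\<^sup>2 < d\<^sup>2 + inverse (real (Suc n))" for n
  proof -
    have "d < sqrt (d\<^sup>2 + inverse (real (Suc n)))"
      by (rule real_less_rsqrt) simp
    then obtain k where "k \<in> M" and k: "norm (x - k) < sqrt (d\<^sup>2 + inverse (real (Suc n)))"
      using cInf_lessD[of "(\<lambda>k. norm (x - k)) ` M"] \<open>0 \<in> M\<close> unfolding d_def by blast
    moreover have "(norm (x - k))\<^sup>2 < (sqrt (d\<^sup>2 + inverse (real (Suc n))))\<^sup>2"
      using k by (intro power_strict_mono) auto
    ultimately show ?thesis by auto
  qed
  then obtain k where kM: "\<And>n. k n \<in> M"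
    and kd: "\<And>n. (norm (x - k n))\<^sup>2 < d\<^sup>2 + inverse (real (Suc n))"
    by metis
  have "(norm (k i - k j))\<^sup>2 \<le> 2 * inverse (real (Suc i)) + 2 * inverse (real (Suc j))" for i j
    using power2_norm_diff_le_near_closest[OF M kM kM low d0, of i j] kd[of i] kd[of j] by simp
  moreover have "(\<lambda>n. 2 * inverse (real (Suc n))) \<longlonglongrightarrow> 0"
    using tendsto_mult_right_zero[OF LIMSEQ_inverse_real_of_nat] by simp
  ultimately have "Cauchy k"
    by (intro Cauchy_if_power2_norm_diff_le[where e = "\<lambda>n. 2 * inverse (real (Suc n))"])
  then obtain m where km: "k \<longlonglongrightarrow> m"
    using Cauchy_convergent_iff convergent_def by blast
  have "m \<in> M" using closed_sequentially[OF \<open>closed M\<close> _ km] kM by blast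
  have "(\<lambda>n. (norm (x - k n))\<^sup>2) \<longlonglongrightarrow> (norm (x - m))\<^sup>2"
    by (intro tendsto_intros km)
  moreover have "(\<lambda>n. d\<^sup>2 + inverse (real (Suc n))) \<longlonglongrightarrow> d\<^sup>2 + 0"
    by (intro tendsto_intros LIMSEQ_inverse_real_of_nat)
  ultimately have "(norm (x - m))\<^sup>2 \<le> d\<^sup>2 + 0"
  proof (rule LIMSEQ_le)
    show "\<exists>N. \<forall>n\<ge>N. (norm (x - k n))\<^sup>2 \<le> d\<^sup>2 + inverse (real (Suc n))"
      using kd by (intro exI[of _ 0] allI impI) (simp add: less_imp_le)
  qed
  then have "norm (x - m) \<le> d"
    using d0 by (simp add: power2_le_imp_le[of "norm (x - m)" d])
  then show ?thesis
    using \<open>m \<in> M\<close> low by (meson order_trans)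
qed

lemma closest_point_orthogonal:
  fixes M :: "'a::complex_inner set"
  assumes M: "csubspace M" and "m \<in> M" and "k \<in> M"
    and min: "\<And>k. k \<in> M \<Longrightarrow> norm (x - m) \<le> norm (x - k)"
  shows "cinner (x - m) k = 0"
proof (rule ccontr)
  define c where "c = cinner (x - m) k"
  assume "cinner (x - m) k \<noteq> 0"
  then have c0: "cmod c > 0" unfolding c_def by simp
  \<comment> \<open>moving from \<open>m\<close> towards \<open>m + c k\<close> by a step small compared with \<open>\<parallel>k\<parallel>\<close> gets closer to \<open>x\<close>\<close>
  define t :: real where "t = 1 / ((norm k)\<^sup>2 + 1)"
  have k1: "(norm k)\<^sup>2 + 1 > 0" using zero_le_power2[of "norm k"] by linarith
  then have t0: "t > 0" unfolding t_def by simp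
  have tk: "t * (norm k)\<^sup>2 < 1" unfolding t_def using k1 by simp
  define s where "s = complex_of_real t * c"
  have "m + s *\<^sub>C k \<in> M" using M \<open>m \<in> M\<close> \<open>k \<in> M\<close> by (simp add: csubspace_def)
  then have "norm (x - m) \<le> norm (x - (m + s *\<^sub>C k))" by (rule min)
  also have "x - (m + s *\<^sub>C k) = (x - m) - s *\<^sub>C k" by simp
  finally have "(norm (x - m))\<^sup>2 \<le> (norm ((x - m) - s *\<^sub>C k))\<^sup>2"
    by (simp add: power_mono)
  also have "\<dots> = (norm (x - m))\<^sup>2 - 2 * Re (cnj s * c) + (cmod s)\<^sup>2 * (norm k)\<^sup>2"
    by (simp add: power2_norm_diff_scaleC c_def)
  also have "cnj s * c = complex_of_real (t * (cmod c)\<^sup>2)"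
  proof -
    have "c * cnj c = complex_of_real ((cmod c)\<^sup>2)" by (rule complex_norm_square[symmetric])
    then show ?thesis by (simp add: s_def mult.commute mult.left_commute)
  qed
  also have "(cmod s)\<^sup>2 = t\<^sup>2 * (cmod c)\<^sup>2"
    using t0 by (simp add: s_def norm_mult power_mult_distrib)
  finally have "2 * (t * (cmod c)\<^sup>2) \<le> (t * (norm k)\<^sup>2) * (t * (cmod c)\<^sup>2)"
    by (simp add: power2_eq_square algebra_simps)
  moreover have "t * (cmod c)\<^sup>2 > 0" using t0 c0 by simp
  ultimately have "2 \<le> t * (norm k)\<^sup>2" by (rule mult_right_le_imp_le)
  then show False using tk by simp
qed

lemma kernel_orthogonal_decomposition:
  fixes g :: "'a::chilbert_space \<Rightarrow> 'b::real_normed_vector"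
  assumes g: "bounded_linear g" and hom: "\<And>c x. g x = 0 \<Longrightarrow> g (c *\<^sub>C x) = 0"
  shows "\<exists>m. g m = 0 \<and> (\<forall>k. g k = 0 \<longrightarrow> cinner (x - m) k = 0)"
proof -
  interpret bounded_linear g by (rule g)
  have "closed {x. g x = 0}"
    by (intro closed_Collect_eq continuous_on_id continuous_on_const continuous_on)
  moreover have "csubspace {x. g x = 0}"
    by (simp add: csubspace_def hom add)
  ultimately obtain m where "g m = 0" and "\<And>k. g k = 0 \<Longrightarrow> norm (x - m) \<le> norm (x - k)"
    using closed_csubspace_closest_point by blast
  with \<open>csubspace {x. g x = 0}\<close> show ?thesis
    using closest_point_orthogonal[of "{x. g x = 0}" m] by auto
qed

lemma bounded_linear_cinner_left: "bounded_linear (\<lambda>x::'a::complex_inner. cinner x y)"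
proof (rule bounded_linear_intro)
  show "cinner (r *\<^sub>R x) y = r *\<^sub>R cinner x y" for r x
    by (simp add: scaleR_scaleC cinner_scaleC_left scaleR_conv_of_real)
  show "norm (cinner x y) \<le> norm x * norm y" for x
    by (rule norm_cinner_le)
qed (rule cinner_add_left)

lemma riesz_representation:
  fixes g :: "'a::chilbert_space \<Rightarrow> complex"
  assumes g: "bounded_linear g" and hom: "\<And>c x. g (c *\<^sub>C x) = c * g x"
  shows "\<exists>w. \<forall>x. g x = cinner x w"
proof (cases "\<forall>x. g x = 0")
  case True
  then show ?thesis by (intro exI[of _ 0]) simp
next
  case False
  interpret bounded_linear g by (rule g)
  obtain x0 where "g x0 \<noteq> 0" using False by blast
  obtain m where "g m = 0" and orth: "\<And>k. g k = 0 \<Longrightarrow> cinner (x0 - m) k = 0"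
    using kernel_orthogonal_decomposition[OF g, of x0] hom by auto
  define u where "u = x0 - m"
  have gu: "g u \<noteq> 0" using \<open>g x0 \<noteq> 0\<close> \<open>g m = 0\<close> by (simp add: u_def diff)
  then have "u \<noteq> 0" by auto
  then have uu: "cinner u u \<noteq> 0" by (simp add: cinner_eq_zero_iff)
  have "g x = cinner x (cnj (g u / cinner u u) *\<^sub>C u)" for x
  proof -
    have "g (x - (g x / g u) *\<^sub>C u) = 0" using gu by (simp add: diff hom)
    then have "cinner u (x - (g x / g u) *\<^sub>C u) = 0" using orth by (simp add: u_def)
    then have "cinner (x - (g x / g u) *\<^sub>C u) u = 0" by (metis cinner_commute complex_cnj_zero)
    then have "cinner x u = (g x / g u) * cinner u u"
      by (simp add: cinner.diff_left cinner_scaleC_left)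
    then show ?thesis using uu gu by (simp add: cinner.scale_right field_simps)
  qed
  then show ?thesis by blast
qed

lemma cbounded_linear_imp_bounded_linear:
  assumes "cbounded_linear f" shows "bounded_linear f"
  using assms unfolding cbounded_linear_def
  by (auto intro!: bounded_linear_intro simp: scaleR_scaleC)

lemma cbounded_linear_bound:
  assumes "cbounded_linear f" shows "\<exists>K\<ge>0. \<forall>x. norm (f x) \<le> K * norm x"
proof -
  obtain K where K: "\<And>x. norm (f x) \<le> norm x * K"
    using assms unfolding cbounded_linear_def by blast
  have "norm (f x) \<le> \<bar>K\<bar> * norm x" for x
  proof -
    have "norm x * K \<le> norm x * \<bar>K\<bar>" by (intro mult_left_mono) auto
    then show ?thesis using K[of x] by (simp add: mult.commute)
  qed
  then show ?thesis by (intro exI[of _ "\<bar>K\<bar>"]) simp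
qed

lemma cadj_adjoint:
  fixes T :: "'a::chilbert_space \<Rightarrow> 'a"
  assumes T: "cbounded_linear T"
  shows "cinner (T x) y = cinner x (cadj T y)"
proof -
  have "\<exists>w. \<forall>x. cinner (T x) y = cinner x w" for y
  proof (rule riesz_representation)
    show "bounded_linear (\<lambda>x. cinner (T x) y)"
      by (rule bounded_linear_compose[OF bounded_linear_cinner_left cbounded_linear_imp_bounded_linear[OF T]])
    show "cinner (T (c *\<^sub>C x)) y = c * cinner (T x) y" for c x
      using T by (simp add: cbounded_linear_def cinner_scaleC_left)
  qed
  then obtain T' where T': "\<And>x y. cinner (T x) y = cinner x (T' y)" by metis
  have "\<exists>!T'. \<forall>x y. cinner (T x) y = cinner x (T' y)"
  proof (rule ex1I)
    show "\<forall>x y. cinner (T x) y = cinner x (T' y)" using T' by blast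
    fix T'' assume T'': "\<forall>x y. cinner (T x) y = cinner x (T'' y)"
    show "T'' = T'"
    proof
      fix y show "T'' y = T' y" by (rule cinner_right_eqI) (simp add: T'[symmetric] T'')
    qed
  qed
  from theI'[OF this] show ?thesis
    unfolding cadj_def by blast
qed

lemma mp_inv_eqI:
  assumes A: "cbounded_linear A" and orth: "\<And>k. A k = 0 \<Longrightarrow> cinner z k = 0" and "A z = y"
  shows "mp_inv A y = z"
  unfolding mp_inv_def
proof (rule the_equality)
  show "(\<forall>k. A k = 0 \<longrightarrow> cinner z k = 0) \<and> A z = y" using assms by blast
  fix z' assume z': "(\<forall>k. A k = 0 \<longrightarrow> cinner z' k = 0) \<and> A z' = y"
  have "A (z' - z) = 0"
    using z' \<open>A z = y\<close> linear_diff[OF bounded_linear.linear[OF cbounded_linear_imp_bounded_linear[OF A]]]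
    by simp
  then have "cinner (z' - z) (z' - z) = 0"
    using z' orth by (simp add: cinner.diff_left)
  then show "z' = z" by (simp add: cinner_eq_zero_iff)
qed

lemma mp_inv_range:
  fixes A :: "'a::chilbert_space \<Rightarrow> 'a"
  assumes A: "cbounded_linear A"
  shows "A (mp_inv A (A v)) = A v" and "A k = 0 \<Longrightarrow> cinner (mp_inv A (A v)) k = 0"
proof -
  interpret bounded_linear A by (rule cbounded_linear_imp_bounded_linear[OF A])
  obtain m where "A m = 0" and orth: "\<And>k. A k = 0 \<Longrightarrow> cinner (v - m) k = 0"
    using kernel_orthogonal_decomposition[OF bounded_linear_axioms, of v] A
    by (auto simp: cbounded_linear_def)
  then have "mp_inv A (A v) = v - m"
    by (intro mp_inv_eqI[OF A]) (simp_all add: diff)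
  then show "A (mp_inv A (A v)) = A v" and "A k = 0 \<Longrightarrow> cinner (mp_inv A (A v)) k = 0"
    using \<open>A m = 0\<close> orth by (simp_all add: diff)
qed

lemma positive_op_selfadjoint:
  assumes A: "positive_op A"
  shows "cinner (A x) y = cinner x (A y)"
proof -
  have add: "\<And>x y. A (x + y) = A x + A y" and scale: "\<And>c x. A (c *\<^sub>C x) = c *\<^sub>C A x"
    and real: "\<And>x. Im (cinner (A x) x) = 0"
    using A by (auto simp: positive_op_def cbounded_linear_def)
  define p where "p = cinner (A x) y"
  define q where "q = cinner (A y) x"
  have "cinner (A (x + y)) (x + y) = cinner (A x) x + p + q + cinner (A y) y"
    by (simp add: p_def q_def add cinner_add_left cinner.add_right)
  then have "Im p + Im q = 0" using real[of "x + y"] real[of x] real[of y] by simp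
  moreover have "cinner (A (x + \<i> *\<^sub>C y)) (x + \<i> *\<^sub>C y)
      = cinner (A x) x - \<i> * p + \<i> * q + cinner (A y) y"
    by (simp add: p_def q_def add scale cinner_add_left cinner_scaleC_left
        cinner.add_right cinner.scale_right distrib_left mult.assoc[symmetric])
  then have "Re q - Re p = 0" using real[of "x + \<i> *\<^sub>C y"] real[of x] real[of y] by simp
  ultimately have "cnj q = p" by (simp add: complex_eq_iff)
  then show ?thesis by (simp add: p_def q_def cinner_commute[of x])
qed

section \<open>The \<open>A\<close>-semi-inner product\<close>

definition A_adjoint :: "('a::complex_inner \<Rightarrow> 'a) \<Rightarrow> ('a \<Rightarrow> 'a) \<Rightarrow> ('a \<Rightarrow> 'a) \<Rightarrow> bool" where
  "A_adjoint A S T \<longleftrightarrow> (\<forall>x y. cinnerA A (S x) y = cinnerA A x (T y))"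

definition A_bounded :: "('a::complex_inner \<Rightarrow> 'a) \<Rightarrow> ('a \<Rightarrow> 'a) \<Rightarrow> bool" where
  "A_bounded A S \<longleftrightarrow> (\<exists>c\<ge>0. \<forall>x. normA A (S x) \<le> c * normA A x)"

locale positive_operator =
  fixes A :: "'a::chilbert_space \<Rightarrow> 'a"
  assumes positive: "positive_op A"
begin

lemma cbounded_linear_A: "cbounded_linear A"
  using positive by (simp add: positive_op_def)

lemma add: "A (x + y) = A x + A y" and scale: "A (c *\<^sub>C x) = c *\<^sub>C A x"
  using cbounded_linear_A by (simp_all add: cbounded_linear_def)

sublocale Ainner: semi_inner "cinnerA A" scaleC
proof
  fix x y z :: 'a and c
  show "cinnerA A (x + y) z = cinnerA A x z + cinnerA A y z"
    by (simp add: cinnerA_def add cinner_add_left)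
  show "cinnerA A (c *\<^sub>C x) y = c * cinnerA A x y"
    by (simp add: cinnerA_def scale cinner_scaleC_left)
  show "cinnerA A x y = cnj (cinnerA A y x)"
    by (simp add: cinnerA_def positive_op_selfadjoint[OF positive] cinner_commute[of x])
  show "0 \<le> Re (cinnerA A x x)"
    using positive by (simp add: cinnerA_def positive_op_def)
qed

sublocale A0inner: semi_inner "cinnerA0 A" "\<lambda>c z. (c *\<^sub>C fst z, c *\<^sub>C snd z)"
proof
  fix x y z :: "'a \<times> 'a" and c
  show "cinnerA0 A (x + y) z = cinnerA0 A x z + cinnerA0 A y z"
    by (simp add: cinnerA0_def Ainner.add_left)
  show "cinnerA0 A (c *\<^sub>C fst x, c *\<^sub>C snd x) y = c * cinnerA0 A x y"
    by (simp add: cinnerA0_def Ainner.scale_left distrib_left)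
  show "cinnerA0 A x y = cnj (cinnerA0 A y x)"
    by (simp add: cinnerA0_def Ainner.conj_sym[of "fst x"] Ainner.conj_sym[of "snd x"])
  show "0 \<le> Re (cinnerA0 A x x)"
    using Ainner.diag_nonneg[of "fst x"] Ainner.diag_nonneg[of "snd x"] by (simp add: cinnerA0_def)
qed

lemma normA_nonneg: "0 \<le> normA A x"
  using Ainner.diag_nonneg[of x] by (simp add: normA_def cinnerA_def)

lemma power2_normA: "(normA A x)\<^sup>2 = Re (cinnerA A x x)"
  using Ainner.diag_nonneg[of x] by (simp add: normA_def cinnerA_def)

lemma normA_cauchy_schwarz: "cmod (cinnerA A x y) \<le> normA A x * normA A y"
  using Ainner.cauchy_schwarz_sqrt by (simp add: normA_def cinnerA_def)

lemma normA_scaleC: "normA A (c *\<^sub>C x) = cmod c * normA A x"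
proof -
  have "Re (cinnerA A (c *\<^sub>C x) (c *\<^sub>C x)) = (cmod c)\<^sup>2 * Re (cinnerA A x x)"
    using Ainner.Re_diag_diff_scale[of 0 "-c" x] by (simp add: scaleC_minus_left)
  then show ?thesis by (simp add: normA_def cinnerA_def real_sqrt_mult)
qed

lemma normA_triangle: "normA A (x + y) \<le> normA A x + normA A y"
proof -
  have "(normA A (x + y))\<^sup>2 = (normA A x)\<^sup>2 + 2 * Re (cinnerA A x y) + (normA A y)\<^sup>2"
    by (simp add: power2_normA Ainner.add_left Ainner.add_right Ainner.conj_sym[of y x])
  also have "\<dots> \<le> (normA A x + normA A y)\<^sup>2"
    using complex_Re_le_cmod[of "cinnerA A x y"] normA_cauchy_schwarz[of x y]
    by (simp add: power2_sum)
  finally show ?thesis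
    by (rule power2_le_imp_le) (simp add: normA_nonneg add_nonneg_nonneg)
qed

lemma power2_normA0: "(normA0 A z)\<^sup>2 = (normA A (fst z))\<^sup>2 + (normA A (snd z))\<^sup>2"
  using A0inner.diag_nonneg[of z] by (simp add: normA0_def power2_normA cinnerA0_def)

lemma normA0_cauchy_schwarz: "cmod (cinnerA0 A z w) \<le> normA0 A z * normA0 A w"
  using A0inner.cauchy_schwarz_sqrt by (simp add: normA0_def)

lemma power2_normA_le_mult:
  assumes "cinnerA A u u = cinnerA A x v"
  shows "(normA A u)\<^sup>2 \<le> normA A x * normA A v"
proof -
  have "(normA A u)\<^sup>2 = Re (cinnerA A x v)" using assms by (simp add: power2_normA)
  also have "\<dots> \<le> cmod (cinnerA A x v)" by (rule complex_Re_le_cmod)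
  also have "\<dots> \<le> normA A x * normA A v" by (rule normA_cauchy_schwarz)
  finally show ?thesis .
qed

lemma normA_unit_exists:
  assumes "A \<noteq> (\<lambda>x. 0)"
  shows "\<exists>x. normA A x = 1"
proof -
  obtain x where "A x \<noteq> 0" using assms by blast
  \<comment> \<open>\<open>\<parallel>A x\<parallel>\<^sup>2 = \<langle>x, A x\<rangle>\<^sub>A \<le> \<parallel>x\<parallel>\<^sub>A \<parallel>A x\<parallel>\<^sub>A\<close>, so \<open>x\<close> has positive \<open>A\<close>-seminorm\<close>
  have "cmod (cinner (A x) (A x)) \<le> normA A x * normA A (A x)"
    using normA_cauchy_schwarz[of x "A x"] by (simp add: cinnerA_def)
  then have "normA A x \<noteq> 0" using \<open>A x \<noteq> 0\<close> by (auto simp: cinner_eq_zero_iff)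
  then have "normA A x > 0" using normA_nonneg[of x] by simp
  then have "normA A (complex_of_real (1 / normA A x) *\<^sub>C x) = 1"
    by (simp add: normA_scaleC norm_divide)
  then show ?thesis by blast
qed

lemma normA0_unit_exists:
  assumes "A \<noteq> (\<lambda>x. 0)" shows "\<exists>z. normA0 A z = 1"
proof -
  obtain x where "normA A x = 1" using normA_unit_exists[OF assms] by blast
  then have "normA0 A (x, 0) = 1"
    by (simp add: normA0_def cinnerA0_def power2_normA[symmetric])
  then show ?thesis by blast
qed

lemma A_adjoint_sym:
  assumes "A_adjoint A S T" shows "A_adjoint A T S"
proof -
  have "cinnerA A (T x) y = cinnerA A x (S y)" for x y
  proof -
    have "cinnerA A (T x) y = cnj (cinnerA A y (T x))" by (rule Ainner.conj_sym)
    also have "\<dots> = cnj (cinnerA A (S y) x)" using assms by (simp add: A_adjoint_def)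
    also have "\<dots> = cinnerA A x (S y)" by (simp add: Ainner.conj_sym[of x])
    finally show ?thesis .
  qed
  then show ?thesis by (simp add: A_adjoint_def)
qed

lemma A_adjoint_comp: "A_adjoint A S T \<Longrightarrow> A_adjoint A S' T' \<Longrightarrow> A_adjoint A (S \<circ> S') (T' \<circ> T)"
  by (simp add: A_adjoint_def)

lemma A_adjoint_comp_selfadjoint: "A_adjoint A S T \<Longrightarrow> A_adjoint A (S \<circ> T) (S \<circ> T)"
  by (rule A_adjoint_comp[OF _ A_adjoint_sym])

lemma sharpA_eq:
  assumes C: "cbounded_linear C" and T: "A_adjoint A C T"
  shows "sharpA A C x = mp_inv A (A (T x))"
proof -
  have "cadj C (A x) = A (T x)"
  proof (rule cinner_right_eqI)
    fix u
    have "cinner u (cadj C (A x)) = cinner (A (C u)) x"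
      by (simp add: cadj_adjoint[OF C, symmetric] positive_op_selfadjoint[OF positive])
    also have "\<dots> = cinnerA A u (T x)" using T by (simp add: A_adjoint_def cinnerA_def)
    also have "\<dots> = cinner u (A (T x))" by (simp add: cinnerA_def positive_op_selfadjoint[OF positive])
    finally show "cinner u (cadj C (A x)) = cinner u (A (T x))" .
  qed
  then show ?thesis by (simp add: sharpA_def)
qed

lemma BA_E:
  assumes "C \<in> BA A"
  obtains T where "cbounded_linear C" "cbounded_linear T" "A_adjoint A C T"
  using assms unfolding BA_def A_adjoint_def by blast

lemma A_adjoint_sharpA:
  assumes "C \<in> BA A" shows "A_adjoint A (sharpA A C) C"
proof -
  obtain T where C: "cbounded_linear C" and T: "A_adjoint A C T"
    using assms by (rule BA_E)
  have "cinnerA A (sharpA A C x) y = cinnerA A x (C y)" for x y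
  proof -
    have "cinnerA A (sharpA A C x) y = cinnerA A (T x) y"
      using mp_inv_range(1)[OF cbounded_linear_A]
      by (simp add: sharpA_eq[OF C T] cinnerA_def)
    also have "\<dots> = cinnerA A x (C y)"
      using A_adjoint_sym[OF T] by (simp add: A_adjoint_def)
    finally show ?thesis .
  qed
  then show ?thesis by (simp add: A_adjoint_def)
qed

lemma sharpA_scaleC:
  assumes "C \<in> BA A" shows "sharpA A C (c *\<^sub>C x) = c *\<^sub>C sharpA A C x"
proof -
  obtain T where C: "cbounded_linear C" and "cbounded_linear T" and T: "A_adjoint A C T"
    using assms by (rule BA_E)
  then have "T (c *\<^sub>C x) = c *\<^sub>C T x" by (simp add: cbounded_linear_def)
  then show ?thesis
    unfolding sharpA_eq[OF C T]
    by (intro mp_inv_eqI[OF cbounded_linear_A])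
      (simp_all add: scale cinner_scaleC_left mp_inv_range[OF cbounded_linear_A])
qed

section \<open>\<open>A\<close>-bounded operators\<close>

lemma A_bounded_comp:
  assumes "A_bounded A S" and "A_bounded A T" shows "A_bounded A (S \<circ> T)"
proof -
  obtain a b where "a \<ge> 0" "b \<ge> 0" and S: "\<And>x. normA A (S x) \<le> a * normA A x"
    and T: "\<And>x. normA A (T x) \<le> b * normA A x"
    using assms unfolding A_bounded_def by blast
  have "normA A (S (T x)) \<le> (a * b) * normA A x" for x
    using S[of "T x"] mult_left_mono[OF T[of x] \<open>a \<ge> 0\<close>] by (simp add: mult.assoc)
  then show ?thesis
    using \<open>a \<ge> 0\<close> \<open>b \<ge> 0\<close> unfolding A_bounded_def by (auto intro!: exI[of _ "a * b"])
qed

lemma A_bounded_add: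
  assumes "A_bounded A S" and "A_bounded A T" shows "A_bounded A (\<lambda>x. S x + T x)"
proof -
  obtain a b where "a \<ge> 0" "b \<ge> 0" and S: "\<And>x. normA A (S x) \<le> a * normA A x"
    and T: "\<And>x. normA A (T x) \<le> b * normA A x"
    using assms unfolding A_bounded_def by blast
  have "normA A (S x + T x) \<le> (a + b) * normA A x" for x
    using normA_triangle[of "S x" "T x"] S[of x] T[of x] by (simp add: distrib_right)
  then show ?thesis
    using \<open>a \<ge> 0\<close> \<open>b \<ge> 0\<close> unfolding A_bounded_def by (auto intro!: exI[of _ "a + b"])
qed

lemma A_bounded_funpow:
  assumes "A_bounded A S" shows "A_bounded A (S ^^ n)"
proof (induction n)
  case 0
  show ?case unfolding A_bounded_def by (intro exI[of _ 1]) simp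
next
  case (Suc n)
  then show ?case unfolding funpow.simps(2) by (rule A_bounded_comp[OF assms])
qed

lemma A_bounded_if_A_adjoint:
  assumes adj: "A_adjoint A S T" and "A_bounded A T"
  shows "A_bounded A S"
proof -
  obtain c where c: "c \<ge> 0" "\<And>x. normA A (T x) \<le> c * normA A x"
    using assms(2) unfolding A_bounded_def by blast
  have "normA A (S x) \<le> c * normA A x" for x
  proof -
    have "(normA A (S x))\<^sup>2 \<le> normA A x * normA A (T (S x))"
      by (rule power2_normA_le_mult) (use adj in \<open>simp add: A_adjoint_def\<close>)
    also have "\<dots> \<le> normA A x * (c * normA A (S x))"
      by (intro mult_left_mono c(2) normA_nonneg)
    finally have "normA A (S x) * normA A (S x) \<le> (c * normA A x) * normA A (S x)"
      by (simp add: power2_eq_square algebra_simps)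
    then show ?thesis
      using normA_nonneg[of "S x"] by (cases "normA A (S x) = 0") (auto simp: c normA_nonneg less_le)
  qed
  then show ?thesis using c(1) unfolding A_bounded_def by blast
qed

lemma A_bounded_adjoint_comp:
  assumes "A_adjoint A S T" and "A_bounded A T" shows "A_bounded A (S \<circ> T)"
  using A_bounded_comp[OF A_bounded_if_A_adjoint[OF assms] assms(2)] .

lemma normA_power_le:
  assumes "A_adjoint A S S"
  shows "normA A (S x) ^ (2^n) \<le> normA A x ^ (2^n - 1) * normA A ((S ^^ (2^n)) x)"
  using assms
proof (induction n arbitrary: S)
  case 0
  then show ?case by simp
next
  case (Suc n)
  have "(normA A (S x))\<^sup>2 \<le> normA A x * normA A (S (S x))"
    by (rule power2_normA_le_mult) (use Suc.prems in \<open>simp add: A_adjoint_def\<close>)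
  then have "((normA A (S x))\<^sup>2) ^ (2^n) \<le> (normA A x * normA A ((S \<circ> S) x)) ^ (2^n)"
    by (simp add: power_mono)
  then have "normA A (S x) ^ (2^Suc n) \<le> (normA A x * normA A ((S \<circ> S) x)) ^ (2^n)"
    by (simp add: power_mult[symmetric] mult.commute)
  also have "\<dots> \<le> normA A x ^ (2^n) * (normA A x ^ (2^n - 1) * normA A (((S \<circ> S) ^^ (2^n)) x))"
    unfolding power_mult_distrib
    by (intro mult_left_mono Suc.IH A_adjoint_comp Suc.prems) (simp add: normA_nonneg)
  also have "(S \<circ> S) ^^ (2^n) = S ^^ (2^Suc n)"
  proof -
    have "S \<circ> S = S ^^ 2" by (simp add: numeral_2_eq_2)
    then show ?thesis by (simp add: funpow_mult mult.commute)
  qed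
  also have "normA A x ^ (2^n) * (normA A x ^ (2^n - 1) * normA A ((S ^^ (2^Suc n)) x))
      = normA A x ^ (2^Suc n - 1) * normA A ((S ^^ (2^Suc n)) x)"
  proof -
    have "2^n + (2^n - 1) = (2::nat)^Suc n - 1" by simp
    then show ?thesis by (simp add: power_add[symmetric] mult.assoc)
  qed
  finally show ?case .
qed

lemma normA_le_norm:
  obtains K where "K \<ge> 0" and "\<And>y. normA A y \<le> K * norm y"
proof -
  obtain KA where KA: "KA \<ge> 0" "\<And>x. norm (A x) \<le> KA * norm x"
    using cbounded_linear_bound[OF cbounded_linear_A] by blast
  have "normA A y \<le> sqrt KA * norm y" for y
  proof -
    have "(normA A y)\<^sup>2 \<le> cmod (cinner (A y) y)"
      using complex_Re_le_cmod by (simp add: power2_normA cinnerA_def)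
    also have "\<dots> \<le> (KA * norm y) * norm y"
      by (rule order_trans[OF norm_cinner_le mult_right_mono[OF KA(2) norm_ge_zero]])
    also have "\<dots> = (sqrt KA * norm y)\<^sup>2" using KA(1) by (simp add: power2_eq_square)
    finally show ?thesis by (rule power2_le_imp_le) (simp add: KA(1))
  qed
  then show ?thesis using KA(1) by (intro that[of "sqrt KA"]) auto
qed

lemma A_bounded_if_unit_bound:
  assumes sym: "A_adjoint A S S" and hom: "\<And>c x. S (c *\<^sub>C x) = c *\<^sub>C S x"
    and unit: "\<And>x. normA A x = 1 \<Longrightarrow> normA A (S x) \<le> K" and "0 \<le> K"
  shows "A_bounded A S"
proof -
  have "normA A (S x) \<le> K * normA A x" for x
  proof (cases "normA A x = 0")
    case True
    have "(normA A (S x))\<^sup>2 \<le> normA A x * normA A (S (S x))"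
      by (rule power2_normA_le_mult) (use sym in \<open>simp add: A_adjoint_def\<close>)
    then show ?thesis using True by simp
  next
    case False
    then have p: "normA A x > 0" using normA_nonneg[of x] by simp
    define x' where "x' = complex_of_real (1 / normA A x) *\<^sub>C x"
    have "normA A x' = 1" using p by (simp add: x'_def normA_scaleC norm_divide)
    then have "normA A (S x') \<le> K" by (rule unit)
    moreover have "normA A (S x') = normA A (S x) / normA A x"
      using p by (simp add: x'_def hom normA_scaleC norm_divide)
    ultimately show ?thesis using p by (simp add: divide_le_eq)
  qed
  then show ?thesis using \<open>0 \<le> K\<close> unfolding A_bounded_def by (auto intro!: exI[of _ K])
qed

lemma A_bounded_if_selfadjoint:
  assumes sym: "A_adjoint A S S" and hom: "\<And>c x. S (c *\<^sub>C x) = c *\<^sub>C S x"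
    and bnd: "\<And>x. norm (S x) \<le> K0 * norm x"
  shows "A_bounded A S"
proof -
  define K where "K = max K0 1"
  have K1: "K \<ge> 1" by (simp add: K_def)
  have powb: "norm ((S ^^ N) x) \<le> K ^ N * norm x" for N x
  proof (induction N)
    case (Suc N)
    have "norm (S ((S ^^ N) x)) \<le> K * norm ((S ^^ N) x)"
      unfolding K_def by (rule order_trans[OF bnd mult_right_mono[OF max.cobounded1 norm_ge_zero]])
    then have "norm ((S ^^ Suc N) x) \<le> K * norm ((S ^^ N) x)" by simp
    also have "\<dots> \<le> K * (K ^ N * norm x)" using K1 Suc.IH by (intro mult_left_mono) auto
    finally show ?case by (simp add: mult.assoc)
  qed simp
  obtain KA where KA: "KA \<ge> 0" "\<And>y. normA A y \<le> KA * norm y"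
    using normA_le_norm by blast
  \<comment> \<open>for \<open>A\<close>-unit \<open>x\<close>, \<open>normA_power_le\<close> gives \<open>\<parallel>S x\<parallel>\<^sub>A\<^bsup>2\<^sup>n\<^esup> \<le> \<parallel>S\<^bsup>2\<^sup>n\<^esup> x\<parallel>\<^sub>A \<le> KA K\<^bsup>2\<^sup>n\<^esup> \<parallel>x\<parallel>\<close>,
    which forces \<open>\<parallel>S x\<parallel>\<^sub>A \<le> K\<close>\<close>
  have "normA A (S x) \<le> K" if x1: "normA A x = 1" for x
  proof (rule ccontr)
    assume "\<not> normA A (S x) \<le> K"
    define r where "r = normA A (S x) / K"
    have r1: "r > 1" using \<open>\<not> normA A (S x) \<le> K\<close> K1 by (simp add: r_def)
    have rb: "r ^ (2^n) \<le> KA * norm x" for n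
    proof -
      have "normA A (S x) ^ (2^n) \<le> normA A ((S ^^ (2^n)) x)"
        using normA_power_le[OF sym, of x n] x1 by simp
      also have "\<dots> \<le> KA * (K ^ (2^n) * norm x)"
        by (rule order_trans[OF KA(2) mult_left_mono[OF powb KA(1)]])
      finally have "r ^ (2^n) * K ^ (2^n) \<le> (KA * norm x) * K ^ (2^n)"
        using K1 by (simp add: r_def power_divide algebra_simps)
      then show ?thesis using K1 by simp
    qed
    obtain n where n: "KA * norm x < r ^ n" using real_arch_pow[OF r1] by blast
    have "r ^ n \<le> r ^ (2^n)" using r1 by (intro power_increasing) (simp_all add: less_imp_le)
    then show False using n rb[of n] by simp
  qed
  then show ?thesis using K1 by (intro A_bounded_if_unit_bound[OF sym hom]) auto
qed

lemma BA_imp_A_bounded: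
  assumes "S \<in> BA A" shows "A_bounded A S"
proof -
  obtain T where S: "cbounded_linear S" and T: "cbounded_linear T" and adj: "A_adjoint A S T"
    using assms by (rule BA_E)
  obtain KS where KS: "KS \<ge> 0" "\<And>x. norm (S x) \<le> KS * norm x"
    using cbounded_linear_bound[OF S] by blast
  obtain KT where KT: "\<And>x. norm (T x) \<le> KT * norm x" "KT \<ge> 0"
    using cbounded_linear_bound[OF T] by blast
  have "A_bounded A (T \<circ> S)"
  proof (rule A_bounded_if_selfadjoint)
    show "A_adjoint A (T \<circ> S) (T \<circ> S)"
      by (rule A_adjoint_comp[OF A_adjoint_sym[OF adj] adj])
    show "(T \<circ> S) (c *\<^sub>C x) = c *\<^sub>C (T \<circ> S) x" for c x
      using S T by (simp add: cbounded_linear_def)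
    show "norm ((T \<circ> S) x) \<le> (KT * KS) * norm x" for x
      using KT(1)[of "S x"] mult_left_mono[OF KS(2)[of x] KT(2)] by (simp add: mult.assoc)
  qed
  then obtain K where K: "K \<ge> 0" "\<And>x. normA A (T (S x)) \<le> K * normA A x"
    unfolding A_bounded_def by auto
  have "normA A (S x) \<le> sqrt K * normA A x" for x
  proof -
    have "(normA A (S x))\<^sup>2 \<le> normA A x * normA A (T (S x))"
      by (rule power2_normA_le_mult) (use adj in \<open>simp add: A_adjoint_def\<close>)
    also have "\<dots> \<le> normA A x * (K * normA A x)"
      by (intro mult_left_mono K(2) normA_nonneg)
    also have "\<dots> = (sqrt K * normA A x)\<^sup>2" using K(1) by (simp add: power2_eq_square)
    finally show ?thesis by (rule power2_le_imp_le) (simp add: K(1) normA_nonneg)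
  qed
  then show ?thesis using K(1) unfolding A_bounded_def by (auto intro!: exI[of _ "sqrt K"])
qed

section \<open>Numerical radii and the Davis-Wielandt radius\<close>

lemma bdd_above_A_numerical_range:
  assumes "A_bounded A S" shows "bdd_above {cmod (cinnerA A (S z) z) | z. normA A z = 1}"
proof -
  obtain c where c: "\<And>x. normA A (S x) \<le> c * normA A x"
    using assms unfolding A_bounded_def by blast
  have "cmod (cinnerA A (S z) z) \<le> c" if "normA A z = 1" for z
    using normA_cauchy_schwarz[of "S z" z] c[of z] that by simp
  then show ?thesis by (intro bdd_aboveI[of _ c]) auto
qed

lemma cmod_cinnerA_le_omegaA:
  assumes bounded: "A_bounded A S" and hom: "\<And>c x. S (c *\<^sub>C x) = c *\<^sub>C S x"
  shows "cmod (cinnerA A (S x) x) \<le> omegaA A S * (normA A x)\<^sup>2"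
proof (cases "normA A x = 0")
  case True
  obtain c where "\<And>x. normA A (S x) \<le> c * normA A x"
    using bounded unfolding A_bounded_def by blast
  then have "normA A (S x) \<le> 0" using True by (metis mult_zero_right)
  then have "normA A (S x) = 0" using normA_nonneg[of "S x"] by linarith
  then show ?thesis using True normA_cauchy_schwarz[of "S x" x] by simp
next
  case False
  define n where "n = normA A x"
  have n0: "n > 0" using False normA_nonneg[of x] by (simp add: n_def)
  define x' where "x' = complex_of_real (1 / n) *\<^sub>C x"
  have "normA A x' = 1" using n0 by (simp add: x'_def normA_scaleC norm_divide n_def)
  then have "cmod (cinnerA A (S x') x') \<le> omegaA A S"
    unfolding omegaA_def by (intro cSup_upper bdd_above_A_numerical_range[OF bounded]) blast
  moreover have "cinnerA A (S x') x' = cinnerA A (S x) x / complex_of_real (n\<^sup>2)"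
    by (simp add: x'_def hom Ainner.scale_left Ainner.scale_right power2_eq_square)
  ultimately have "cmod (cinnerA A (S x) x) / n\<^sup>2 \<le> omegaA A S"
    using n0 by (simp add: norm_divide norm_power)
  then show ?thesis using n0 by (simp add: n_def divide_le_eq mult.commute)
qed

lemma cinnerA_quartic:
  assumes "A_adjoint A P P"
  shows "cinnerA A ((P ^^ 2) x + (P ^^ 4) x) x
    = complex_of_real ((normA A (P x))\<^sup>2 + (normA A (P (P x)))\<^sup>2)"
proof -
  have "(P ^^ 2) x = P (P x)" and "(P ^^ 4) x = P (P (P (P x)))"
    by (simp_all add: numeral_eq_Suc)
  then have "cinnerA A ((P ^^ 2) x + (P ^^ 4) x) x
      = cinnerA A (P x) (P x) + cinnerA A (P (P x)) (P (P x))"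
    using assms by (simp add: Ainner.add_left A_adjoint_def)
  also have "\<dots> = complex_of_real (Re (cinnerA A (P x) (P x)))
      + complex_of_real (Re (cinnerA A (P (P x)) (P (P x))))"
    by (simp add: Ainner.diag_real[symmetric])
  finally show ?thesis by (simp add: power2_normA)
qed

lemma quartic_le_omegaA:
  assumes "A_adjoint A P P" and "A_bounded A P" and hom: "\<And>c x. P (c *\<^sub>C x) = c *\<^sub>C P x"
  shows "(normA A (P x))\<^sup>2 + (normA A (P (P x)))\<^sup>2
    \<le> omegaA A (\<lambda>x. (P ^^ 2) x + (P ^^ 4) x) * (normA A x)\<^sup>2"
proof -
  have "A_bounded A (\<lambda>x. (P ^^ 2) x + (P ^^ 4) x)"
    using assms by (intro A_bounded_add A_bounded_funpow)
  moreover have "(P ^^ 2) (c *\<^sub>C x) + (P ^^ 4) (c *\<^sub>C x) = c *\<^sub>C ((P ^^ 2) x + (P ^^ 4) x)" for c x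
    by (simp add: funpow_scaleC[OF hom] scaleC_add_right)
  ultimately have "cmod (cinnerA A ((P ^^ 2) x + (P ^^ 4) x) x)
      \<le> omegaA A (\<lambda>x. (P ^^ 2) x + (P ^^ 4) x) * (normA A x)\<^sup>2"
    by (rule cmod_cinnerA_le_omegaA)
  moreover have "cmod (cinnerA A ((P ^^ 2) x + (P ^^ 4) x) x)
      = (normA A (P x))\<^sup>2 + (normA A (P (P x)))\<^sup>2"
    unfolding cinnerA_quartic[OF assms(1)] norm_of_real by simp
  ultimately show ?thesis by simp
qed

lemma quartic_le_max_omegaA:
  assumes "A_adjoint A P P" and "A_bounded A P" and "\<And>c x. P (c *\<^sub>C x) = c *\<^sub>C P x"
    and "A_adjoint A Q Q" and "A_bounded A Q" and "\<And>c x. Q (c *\<^sub>C x) = c *\<^sub>C Q x"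
    and xy: "(normA A x)\<^sup>2 + (normA A y)\<^sup>2 = 1"
  shows "((normA A (P x))\<^sup>2 + (normA A (P (P x)))\<^sup>2) + ((normA A (Q y))\<^sup>2 + (normA A (Q (Q y)))\<^sup>2)
    \<le> max (omegaA A (\<lambda>x. (P ^^ 2) x + (P ^^ 4) x)) (omegaA A (\<lambda>x. (Q ^^ 2) x + (Q ^^ 4) x))"
    (is "_ \<le> max ?\<omega>P ?\<omega>Q")
proof -
  have "((normA A (P x))\<^sup>2 + (normA A (P (P x)))\<^sup>2) + ((normA A (Q y))\<^sup>2 + (normA A (Q (Q y)))\<^sup>2)
      \<le> ?\<omega>P * (normA A x)\<^sup>2 + ?\<omega>Q * (normA A y)\<^sup>2"
    using assms by (intro add_mono quartic_le_omegaA)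
  also have "\<dots> \<le> max ?\<omega>P ?\<omega>Q * ((normA A x)\<^sup>2 + (normA A y)\<^sup>2)"
    by (simp add: distrib_left add_mono mult_right_mono)
  finally show ?thesis using xy by simp
qed

lemma cmod_cinnerA0_antidiag_le_omegaA0:
  assumes "A_bounded A F" and "A_bounded A G" and z: "normA0 A z = 1"
  shows "cmod (cinnerA0 A (opmat (\<lambda>x. 0) F G (\<lambda>x. 0) z) z)
    \<le> omegaA0 A (opmat (\<lambda>x. 0) F G (\<lambda>x. 0))"
proof -
  obtain a b where "a \<ge> 0" "b \<ge> 0" and F: "\<And>x. normA A (F x) \<le> a * normA A x"
    and G: "\<And>x. normA A (G x) \<le> b * normA A x"
    using assms unfolding A_bounded_def by blast
  define c where "c = max a b"
  have bound: "cmod (cinnerA0 A (opmat (\<lambda>x. 0) F G (\<lambda>x. 0) w) w) \<le> c" if w: "normA0 A w = 1" for w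
  proof -
    obtain x y where w_eq: "w = (x, y)" by fastforce
    have "normA A (F y) \<le> c * normA A y"
      unfolding c_def by (rule order_trans[OF F mult_right_mono[OF max.cobounded1 normA_nonneg]])
    then have "(normA A (F y))\<^sup>2 \<le> (c * normA A y)\<^sup>2"
      by (rule power_mono[OF _ normA_nonneg])
    moreover have "normA A (G x) \<le> c * normA A x"
      unfolding c_def by (rule order_trans[OF G mult_right_mono[OF max.cobounded2 normA_nonneg]])
    then have "(normA A (G x))\<^sup>2 \<le> (c * normA A x)\<^sup>2"
      by (rule power_mono[OF _ normA_nonneg])
    ultimately have "(normA0 A (opmat (\<lambda>x. 0) F G (\<lambda>x. 0) w))\<^sup>2
        \<le> c\<^sup>2 * ((normA A x)\<^sup>2 + (normA A y)\<^sup>2)"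
      by (simp add: power2_normA0 w_eq opmat_def power_mult_distrib distrib_left)
    also have "(normA A x)\<^sup>2 + (normA A y)\<^sup>2 = 1"
      using power2_normA0[of w] w by (simp add: w_eq)
    finally have "(normA0 A (opmat (\<lambda>x. 0) F G (\<lambda>x. 0) w))\<^sup>2 \<le> c\<^sup>2" by simp
    then have "normA0 A (opmat (\<lambda>x. 0) F G (\<lambda>x. 0) w) \<le> c"
      by (rule power2_le_imp_le) (use \<open>a \<ge> 0\<close> in \<open>simp add: c_def\<close>)
    then show ?thesis
      using normA0_cauchy_schwarz[of "opmat (\<lambda>x. 0) F G (\<lambda>x. 0) w" w] w by simp
  qed
  then have bdd: "bdd_above {cmod (cinnerA0 A (opmat (\<lambda>x. 0) F G (\<lambda>x. 0) w) w) | w. normA0 A w = 1}"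
    by (intro bdd_aboveI[of _ c]) blast
  show ?thesis
    unfolding omegaA0_def by (rule cSup_upper[OF _ bdd]) (use z in blast)
qed

text \<open>With \<open>z = (x, y)\<close>, \<open>P = C\<^sup>\<sharp> C\<close> and \<open>Q = B\<^sup>\<sharp> B\<close>, apply \<open>quartic_estimate\<close> in \<open>H \<oplus> H\<close> to
  \<open>w = (B y, C x)\<close>, \<open>v = (P x, Q y)\<close> and \<open>t = (P\<^sup>2 x, Q\<^sup>2 y)\<close>: then \<open>\<langle>w, v\<rangle>\<close> is the
  \<open>A\<^sub>0\<close>-numerical range value of the operator on the right at \<open>z\<close>.\<close>

lemma dwA0_antidiag_pointwise:
  assumes adjC: "A_adjoint A Cs C" and adjB: "A_adjoint A Bs B"
    and homC: "\<And>c x. C (c *\<^sub>C x) = c *\<^sub>C C x" and homCs: "\<And>c x. Cs (c *\<^sub>C x) = c *\<^sub>C Cs x"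
    and homB: "\<And>c x. B (c *\<^sub>C x) = c *\<^sub>C B x" and homBs: "\<And>c x. Bs (c *\<^sub>C x) = c *\<^sub>C Bs x"
    and bC: "A_bounded A C" and bB: "A_bounded A B"
    and z: "normA0 A z = 1"
  shows "((cmod (cinnerA0 A (opmat (\<lambda>x. 0) B C (\<lambda>x. 0) z) z))\<^sup>2
      + (normA0 A (opmat (\<lambda>x. 0) B C (\<lambda>x. 0) z))^4)\<^sup>2
    \<le> max (omegaA A (\<lambda>x. ((Cs \<circ> C) ^^ 2) x + ((Cs \<circ> C) ^^ 4) x))
           (omegaA A (\<lambda>x. ((Bs \<circ> B) ^^ 2) x + ((Bs \<circ> B) ^^ 4) x))
      + 2 * (omegaA0 A (opmat (\<lambda>x. 0) (Cs \<circ> C \<circ> B) (Bs \<circ> B \<circ> C) (\<lambda>x. 0)))\<^sup>2"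
    (is "?lhs \<le> max ?\<omega>C ?\<omega>B + 2 * ?\<omega>0\<^sup>2")
proof -
  obtain x y where z_eq: "z = (x, y)" by fastforce
  define P where "P = Cs \<circ> C"
  define Q where "Q = Bs \<circ> B"
  have P: "A_adjoint A P P" and Q: "A_adjoint A Q Q"
    unfolding P_def Q_def using adjC adjB by (simp_all add: A_adjoint_comp_selfadjoint)
  have bP: "A_bounded A P" and bQ: "A_bounded A Q"
    unfolding P_def Q_def using adjC adjB bC bB by (simp_all add: A_bounded_adjoint_comp)
  have homP: "P (c *\<^sub>C x) = c *\<^sub>C P x" and homQ: "Q (c *\<^sub>C x) = c *\<^sub>C Q x" for c x
    by (simp_all add: P_def Q_def homC homCs homB homBs)
  define w where "w = (B y, C x)"
  define v where "v = (P x, Q y)"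
  define t where "t = (P (P x), Q (Q y))"
  have "(normA0 A w)^4 = ((normA0 A w)\<^sup>2)\<^sup>2" by simp
  also have "\<dots> = (Re (cinnerA0 A w w))\<^sup>2"
    using A0inner.diag_nonneg[of w] by (simp add: normA0_def)
  finally have "?lhs = ((cmod (cinnerA0 A w z))\<^sup>2 + (Re (cinnerA0 A w w))\<^sup>2)\<^sup>2"
    by (simp add: w_def z_eq opmat_def)
  also have "\<dots> \<le> Re (cinnerA0 A v v) + Re (cinnerA0 A t t) + 2 * (cmod (cinnerA0 A w v))\<^sup>2"
  proof (rule A0inner.quartic_estimate)
    show "Re (cinnerA0 A z z) = 1" using z by (simp add: normA0_def)
    show "cinnerA0 A v z = cinnerA0 A w w"
      using adjC adjB by (simp add: v_def w_def z_eq cinnerA0_def P_def Q_def A_adjoint_def add.commute)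
    show "cinnerA0 A t z = cinnerA0 A v v"
      using P Q by (simp add: t_def v_def z_eq cinnerA0_def A_adjoint_def)
  qed
  finally have estimate:
    "?lhs \<le> Re (cinnerA0 A v v) + Re (cinnerA0 A t t) + 2 * (cmod (cinnerA0 A w v))\<^sup>2" .
  have xy: "(normA A x)\<^sup>2 + (normA A y)\<^sup>2 = 1"
    using power2_normA0[of z] z by (simp add: z_eq)
  have "Re (cinnerA0 A v v) + Re (cinnerA0 A t t)
      = ((normA A (P x))\<^sup>2 + (normA A (P (P x)))\<^sup>2) + ((normA A (Q y))\<^sup>2 + (normA A (Q (Q y)))\<^sup>2)"
    by (simp add: v_def t_def cinnerA0_def power2_normA)
  also have "\<dots> \<le> max ?\<omega>C ?\<omega>B"
    unfolding P_def[symmetric] Q_def[symmetric] by (rule quartic_le_max_omegaA[OF P bP homP Q bQ homQ xy])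
  finally have vt: "Re (cinnerA0 A v v) + Re (cinnerA0 A t t) \<le> max ?\<omega>C ?\<omega>B" .
  have wv: "cinnerA0 A w v = cinnerA0 A (opmat (\<lambda>x. 0) (Cs \<circ> C \<circ> B) (Bs \<circ> B \<circ> C) (\<lambda>x. 0) z) z"
    using P Q unfolding P_def[symmetric] Q_def[symmetric]
    by (simp add: w_def v_def z_eq opmat_def cinnerA0_def A_adjoint_def)
  have "cmod (cinnerA0 A w v) \<le> ?\<omega>0"
    unfolding wv
    by (rule cmod_cinnerA0_antidiag_le_omegaA0[OF A_bounded_comp[OF A_bounded_adjoint_comp[OF adjC bC] bB]
          A_bounded_comp[OF A_bounded_adjoint_comp[OF adjB bB] bC] z])
  then have "(cmod (cinnerA0 A w v))\<^sup>2 \<le> ?\<omega>0\<^sup>2"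
    by (rule power_mono) simp
  with estimate vt show ?thesis by linarith
qed

end

lemma dwA0_pow4_le:
  assumes "\<exists>z. normA0 A z = 1"
    and bound: "\<And>z. normA0 A z = 1 \<Longrightarrow> ((cmod (cinnerA0 A (X z) z))\<^sup>2 + (normA0 A (X z))^4)\<^sup>2 \<le> R"
  shows "(dwA0 A X)^4 \<le> R"
proof -
  define D where "D = {sqrt ((cmod (cinnerA0 A (X z) z))\<^sup>2 + (normA0 A (X z))^4) | z. normA0 A z = 1}"
  have D: "0 \<le> e \<and> e \<le> sqrt (sqrt R)" if "e \<in> D" for e
  proof -
    obtain z where z: "normA0 A z = 1"
      and e: "e = sqrt ((cmod (cinnerA0 A (X z) z))\<^sup>2 + (normA0 A (X z))^4)"
      using \<open>e \<in> D\<close> unfolding D_def by blast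
    have "(cmod (cinnerA0 A (X z) z))\<^sup>2 + (normA0 A (X z))^4 \<le> sqrt R"
      using bound[OF z] by (intro real_le_rsqrt)
    then show ?thesis by (simp add: e real_sqrt_le_mono)
  qed
  have "D \<noteq> {}" using assms(1) by (auto simp: D_def)
  then obtain e where "e \<in> D" by blast
  have "0 \<le> Sup D"
    using D \<open>e \<in> D\<close> by (meson bdd_aboveI cSup_upper order_trans)
  moreover have "Sup D \<le> sqrt (sqrt R)"
    using D \<open>D \<noteq> {}\<close> by (intro cSup_least) auto
  ultimately have "(Sup D)^4 \<le> (sqrt (sqrt R))^4"
    by (intro power_mono)
  also have "(sqrt (sqrt R))^4 = R"
  proof -
    have "0 \<le> sqrt (sqrt R)" using D \<open>e \<in> D\<close> by (meson order_trans)
    then have "0 \<le> R" by simp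
    have "(sqrt (sqrt R))^4 = ((sqrt (sqrt R))\<^sup>2)\<^sup>2" by simp
    also have "\<dots> = R" using \<open>0 \<le> R\<close> by simp
    finally show ?thesis .
  qed
  finally show ?thesis by (simp add: dwA0_def D_def)
qed

theorem theorem3p11:
  fixes A B C :: "'a::chilbert_space \<Rightarrow> 'a"
  assumes "positive_op A" and "A \<noteq> (\<lambda>x. 0)"
    and "B \<in> BA A" and "C \<in> BA A"
  shows "(dwA0 A (opmat (\<lambda>x. 0) B C (\<lambda>x. 0))) ^ 4
    \<le> max (omegaA A (\<lambda>x. ((sharpA A C \<circ> C) ^^ 2) x + ((sharpA A C \<circ> C) ^^ 4) x))
           (omegaA A (\<lambda>x. ((sharpA A B \<circ> B) ^^ 2) x + ((sharpA A B \<circ> B) ^^ 4) x))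
      + 2 * (omegaA0 A (opmat (\<lambda>x. 0) (sharpA A C \<circ> C \<circ> B) (sharpA A B \<circ> B \<circ> C) (\<lambda>x. 0))) ^ 2"
proof -
  interpret positive_operator A by unfold_locales (rule assms(1))
  have hom: "S (c *\<^sub>C x) = c *\<^sub>C S x" if "S \<in> BA A" for S c x
    using that by (simp add: BA_def cbounded_linear_def)
  note pointwise = dwA0_antidiag_pointwise[OF A_adjoint_sharpA[OF assms(4)] A_adjoint_sharpA[OF assms(3)]
      hom[OF assms(4)] sharpA_scaleC[OF assms(4)] hom[OF assms(3)] sharpA_scaleC[OF assms(3)]
      BA_imp_A_bounded[OF assms(4)] BA_imp_A_bounded[OF assms(3)]]
  show ?thesis
    by (rule dwA0_pow4_le[OF normA0_unit_exists[OF assms(2)] pointwise])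
qed

end
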